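(* Let $X$ be a random variable with values in $\{0,1,2,\dots\}$ with finite variance and mean $\mu=\mathrm{E}[X]>0$, and let $k\ge 0$ be a fixed natural number. Let $X_1,\dots,X_n$ be i.i.d. copies of $X$, $\overline X_n=\frac{1}{n}\sum_{i=1}^n X_i$, $F_n(k)=\frac1n\sum_{i=1}^n I(X_i\le k)$, $f_k(m)=e^{-m}\left(1+m+\dots+\frac{m^k}{k!}\right)$, and $$V_n^{(k)}=\sqrt n\,\{f_k(\overline X_n)-F_n(k)\}.$$ If $X$ has the Poisson distribution with parameter $\mu$, then $V_n^{(k)}$ converges in distribution as $n\to\infty$ to $\mathcal N(0,\sigma^2_{\mu,k})$, where $$\sigma^2_{\mu,k}=\mathrm{Var}\Big[e^{-\mu}\frac{\mu^k}{k!}X+I(X\le k)\Big]=f_k(\mu)\{1-f_k(\mu)\}-\frac{e^{-2\mu}\mu^{2k+1}}{(k!)^2}.$$ Moreover, if $r_k=P(X\le k)-f_k(\mu)\neq 0$ (so in particular $X$ is not Poisson), then $|V_n^{(k)}|$ converges in probability to $\infty$.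
   Context: $I(\cdot)$ denotes the indicator function. Natural numbers include $0$. *)

theory Defs
  imports "HOL-Probability.Probability"
begin

definition f_poi :: "nat \<Rightarrow> real \<Rightarrow> real" where
  "f_poi k m = exp (- m) * (\<Sum>j\<le>k. m ^ j / fact j)"

text \<open>Sample mean of X_1..X_n (here indexed X 0 .. X (n-1)).\<close>
definition sample_mean :: "(nat \<Rightarrow> 'a \<Rightarrow> nat) \<Rightarrow> nat \<Rightarrow> 'a \<Rightarrow> real" where
  "sample_mean X n \<omega> = (\<Sum>i<n. real (X i \<omega>)) / real n"

definition emp_cdf :: "(nat \<Rightarrow> 'a \<Rightarrow> nat) \<Rightarrow> nat \<Rightarrow> nat \<Rightarrow> 'a \<Rightarrow> real" where
  "emp_cdf X n k \<omega> = (\<Sum>i<n. of_bool (X i \<omega> \<le> k)) / real n"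

definition V_stat :: "(nat \<Rightarrow> 'a \<Rightarrow> nat) \<Rightarrow> nat \<Rightarrow> nat \<Rightarrow> 'a \<Rightarrow> real" where
  "V_stat X k n \<omega> = sqrt (real n) * (f_poi k (sample_mean X n \<omega>) - emp_cdf X n k \<omega>)"

definition sigma2 :: "real \<Rightarrow> nat \<Rightarrow> real" where
  "sigma2 \<mu> k = f_poi k \<mu> * (1 - f_poi k \<mu>) - exp (- 2 * \<mu>) * \<mu> ^ (2 * k + 1) / (fact k)\<^sup>2"

end

theory Submission
  imports Defs
begin

(* Put a = exp(-mu) mu^k / k!, which is -f_k'(mu), y(x) = a x + I(x <= k), c = a mu + f_k(mu) and
   R(x) = f_k(x) - f_k(mu) + a (x - mu). Then, exactly,
     V_n = sqrt n (c - mean of y(X_i)) + sqrt n R(mean of X_i).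
   For Poisson X one has c = E y(X), so the first term tends to N(0, Var y(X)) by the central
   limit theorem, while R(x) = o(|x - mu|) together with Chebyshev's inequality for the sample
   mean makes the second term vanish in probability; Slutsky's lemma combines the two.
   Var y(X) is computed from the first two Poisson moments and E[X I(X <= k)] = mu (f_k(mu) - a).
   If instead P(X <= k) differs from f_k(mu), the weak law of large numbers keeps
   f_k(mean of X_i) - F_n(k) away from 0 with probability tending to one, so |V_n| grows
   like sqrt n. *)

section \<open>Chebyshev bounds for sample means\<close>

context prob_space
begin

lemma expectation_square_sum_indep:
  fixes W :: "nat \<Rightarrow> 'a \<Rightarrow> real"
  assumes indep: "indep_vars (\<lambda>_. borel) W UNIV"
    and square_int: "\<And>i. integrable M (\<lambda>\<omega>. (W i \<omega>)\<^sup>2)"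
    and mean_zero: "\<And>i. expectation (W i) = 0"
    and second_moment: "\<And>i. expectation (\<lambda>\<omega>. (W i \<omega>)\<^sup>2) = v"
  shows "integrable M (\<lambda>\<omega>. (\<Sum>i<n. W i \<omega>)\<^sup>2)"
    and "expectation (\<lambda>\<omega>. (\<Sum>i<n. W i \<omega>)\<^sup>2) = real n * v"
proof -
  have [measurable]: "W i \<in> borel_measurable M" for i
    using indep by (auto simp: indep_vars_def)
  have int: "integrable M (W i)" for i
    by (rule square_integrable_imp_integrable[OF _ square_int]) simp
  have product: "integrable M (\<lambda>\<omega>. W i \<omega> * W j \<omega>)
      \<and> expectation (\<lambda>\<omega>. W i \<omega> * W j \<omega>) = (if i = j then v else 0)" for i j
  proof (cases "i = j")
    case True
    then show ?thesis using square_int second_moment by (simp add: power2_eq_square)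
  next
    case False
    have indep2: "indep_vars (\<lambda>_. borel) W {i, j}"
      by (rule indep_vars_subset[OF indep]) auto
    have "integrable M (\<lambda>\<omega>. \<Prod>l\<in>{i, j}. W l \<omega>)"
      "expectation (\<lambda>\<omega>. \<Prod>l\<in>{i, j}. W l \<omega>) = (\<Prod>l\<in>{i, j}. expectation (W l))"
      by (auto intro!: indep_vars_integrable indep_vars_lebesgue_integral indep2 simp: int)
    then show ?thesis using False mean_zero by simp
  qed
  have square_sum: "(\<Sum>i<n. W i \<omega>)\<^sup>2 = (\<Sum>i<n. \<Sum>j<n. W i \<omega> * W j \<omega>)" for \<omega>
    by (simp add: power2_eq_square sum_product)
  show "integrable M (\<lambda>\<omega>. (\<Sum>i<n. W i \<omega>)\<^sup>2)"
    unfolding square_sum using product by auto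
  show "expectation (\<lambda>\<omega>. (\<Sum>i<n. W i \<omega>)\<^sup>2) = real n * v"
    unfolding square_sum using product by (simp add: Bochner_Integration.integral_sum)
qed

lemma prob_abs_mean_deviation_ge_le:
  fixes Z :: "nat \<Rightarrow> 'a \<Rightarrow> real"
  assumes indep: "indep_vars (\<lambda>_. borel) Z UNIV"
    and square_int: "\<And>i. integrable M (\<lambda>\<omega>. (Z i \<omega>)\<^sup>2)"
    and mean: "\<And>i. expectation (Z i) = m"
    and var: "\<And>i. variance (Z i) = v"
    and "n > 0" and "a > 0"
  shows "prob {\<omega> \<in> space M. a \<le> \<bar>(\<Sum>i<n. Z i \<omega>) / real n - m\<bar>} \<le> v / (real n * a\<^sup>2)"
proof -
  have [measurable]: "Z i \<in> borel_measurable M" for i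
    using indep by (auto simp: indep_vars_def)
  have int: "integrable M (Z i)" for i
    by (rule square_integrable_imp_integrable[OF _ square_int]) simp
  define W where "W i \<omega> = Z i \<omega> - m" for i \<omega>
  define S where "S \<omega> = (\<Sum>i<n. W i \<omega>) / real n" for \<omega>
  have [measurable]: "S \<in> borel_measurable M"
    unfolding S_def W_def by measurable
  have indepW: "indep_vars (\<lambda>_. borel) W UNIV"
    unfolding W_def by (rule indep_vars_compose2[OF indep]) auto
  have square_intW: "integrable M (\<lambda>\<omega>. (W i \<omega>)\<^sup>2)" for i
    using square_int int by (simp add: W_def power2_diff)
  have meanW: "expectation (W i) = 0" for i
    using int mean by (simp add: W_def[abs_def] prob_space)
  have "expectation (\<lambda>\<omega>. (W i \<omega>)\<^sup>2) = v" for i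
    using var mean by (simp add: W_def)
  note sum_moments = expectation_square_sum_indep[OF indepW square_intW meanW this]
  have S_square: "(S \<omega>)\<^sup>2 = (\<Sum>i<n. W i \<omega>)\<^sup>2 / (real n)\<^sup>2" for \<omega>
    by (simp add: S_def power_divide)
  have "integrable M (\<lambda>\<omega>. (S \<omega>)\<^sup>2)"
    unfolding S_square using sum_moments(1) by simp
  moreover have "expectation S = 0"
    using int mean by (simp add: S_def[abs_def] W_def Bochner_Integration.integral_sum prob_space)
  moreover have "expectation (\<lambda>\<omega>. (S \<omega>)\<^sup>2) = v / real n"
    unfolding S_square using sum_moments(2) \<open>n > 0\<close> by (simp add: power2_eq_square)
  ultimately have "prob {\<omega> \<in> space M. \<bar>S \<omega>\<bar> \<ge> a} \<le> v / real n / a\<^sup>2"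
    using Chebyshev_inequality[of S a] \<open>a > 0\<close> by simp
  moreover have "(\<Sum>i<n. Z i \<omega>) / real n - m = S \<omega>" for \<omega>
    using \<open>n > 0\<close> by (simp add: S_def W_def sum_subtractf field_simps)
  ultimately show ?thesis by simp
qed

lemma tendsto_prob_sqrt_remainder_zero:
  fixes Z :: "nat \<Rightarrow> 'a \<Rightarrow> real" and g :: "real \<Rightarrow> real"
  assumes [measurable]: "\<And>n. Z n \<in> borel_measurable M"
    and remainder: "\<And>\<eta>. \<eta> > 0 \<Longrightarrow> \<exists>\<delta>>0. \<forall>x. \<bar>x - m\<bar> < \<delta> \<longrightarrow> \<bar>g x\<bar> \<le> \<eta> * \<bar>x - m\<bar>"
    and chebyshev: "\<And>n a. n > 0 \<Longrightarrow> a > 0 \<Longrightarrow>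
      prob {\<omega> \<in> space M. a \<le> \<bar>Z n \<omega> - m\<bar>} \<le> v / (real n * a\<^sup>2)"
    and "\<epsilon> > 0"
  shows "(\<lambda>n. prob {\<omega> \<in> space M. \<epsilon> \<le> \<bar>sqrt (real n) * g (Z n \<omega>)\<bar>}) \<longlonglongrightarrow> 0"
proof (rule tendstoI)
  fix e :: real assume "e > 0"
  define \<eta> where "\<eta> = \<epsilon> * sqrt (e / (4 * (\<bar>v\<bar> + 1)))"
  have "\<eta> > 0" using \<open>\<epsilon> > 0\<close> \<open>e > 0\<close> by (simp add: \<eta>_def)
  have small: "v * \<eta>\<^sup>2 / \<epsilon>\<^sup>2 < e / 2"
  proof -
    have "v * \<eta>\<^sup>2 / \<epsilon>\<^sup>2 = v * e / (4 * (\<bar>v\<bar> + 1))"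
      using \<open>\<epsilon> > 0\<close> \<open>e > 0\<close> by (simp add: \<eta>_def power_mult_distrib)
    also have "\<dots> \<le> (\<bar>v\<bar> + 1) * e / (4 * (\<bar>v\<bar> + 1))"
      using \<open>e > 0\<close> by (intro divide_right_mono mult_right_mono) auto
    also have "\<dots> = e / 4"
      by (simp add: field_simps add_nonneg_eq_0_iff)
    finally show ?thesis using \<open>e > 0\<close> by linarith
  qed
  obtain \<delta> where "\<delta> > 0" and \<delta>: "\<And>x. \<bar>x - m\<bar> < \<delta> \<Longrightarrow> \<bar>g x\<bar> \<le> \<eta> * \<bar>x - m\<bar>"
    using remainder[OF \<open>\<eta> > 0\<close>] by blast
  have bound: "prob {\<omega> \<in> space M. \<epsilon> \<le> \<bar>sqrt (real n) * g (Z n \<omega>)\<bar>}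
      \<le> v / (real n * \<delta>\<^sup>2) + v * \<eta>\<^sup>2 / \<epsilon>\<^sup>2" if "n > 0" for n
  proof -
    define s where "s = sqrt (real n)"
    have "s > 0" using \<open>n > 0\<close> by (simp add: s_def)
    have "{\<omega> \<in> space M. \<epsilon> \<le> \<bar>s * g (Z n \<omega>)\<bar>}
        \<subseteq> {\<omega> \<in> space M. \<delta> \<le> \<bar>Z n \<omega> - m\<bar>} \<union> {\<omega> \<in> space M. \<epsilon> / (\<eta> * s) \<le> \<bar>Z n \<omega> - m\<bar>}"
    proof (intro subsetI, rule ccontr)
      fix \<omega> assume \<omega>: "\<omega> \<in> {\<omega> \<in> space M. \<epsilon> \<le> \<bar>s * g (Z n \<omega>)\<bar>}"
        and "\<omega> \<notin> {\<omega> \<in> space M. \<delta> \<le> \<bar>Z n \<omega> - m\<bar>} \<union> {\<omega> \<in> space M. \<epsilon> / (\<eta> * s) \<le> \<bar>Z n \<omega> - m\<bar>}"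
      then have near: "\<bar>Z n \<omega> - m\<bar> < \<delta>" and close: "\<bar>Z n \<omega> - m\<bar> < \<epsilon> / (\<eta> * s)"
        by auto
      have "\<bar>s * g (Z n \<omega>)\<bar> \<le> s * (\<eta> * \<bar>Z n \<omega> - m\<bar>)"
        using \<delta>[OF near] \<open>s > 0\<close> by (simp add: abs_mult)
      also have "\<dots> < s * (\<eta> * (\<epsilon> / (\<eta> * s)))"
        using close \<open>s > 0\<close> \<open>\<eta> > 0\<close> by (intro mult_strict_left_mono) auto
      also have "\<dots> = \<epsilon>" using \<open>s > 0\<close> \<open>\<eta> > 0\<close> by simp
      finally show False using \<omega> by simp
    qed
    then have "prob {\<omega> \<in> space M. \<epsilon> \<le> \<bar>s * g (Z n \<omega>)\<bar>}
        \<le> prob {\<omega> \<in> space M. \<delta> \<le> \<bar>Z n \<omega> - m\<bar>} + prob {\<omega> \<in> space M. \<epsilon> / (\<eta> * s) \<le> \<bar>Z n \<omega> - m\<bar>}"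
      by (intro order_trans[OF finite_measure_mono measure_Un_le]) auto
    also have "\<dots> \<le> v / (real n * \<delta>\<^sup>2) + v / (real n * (\<epsilon> / (\<eta> * s))\<^sup>2)"
      using chebyshev[OF \<open>n > 0\<close> \<open>\<delta> > 0\<close>] chebyshev[of n "\<epsilon> / (\<eta> * s)"]
        \<open>n > 0\<close> \<open>\<epsilon> > 0\<close> \<open>\<eta> > 0\<close> \<open>s > 0\<close> by (intro add_mono) auto
    also have "v / (real n * (\<epsilon> / (\<eta> * s))\<^sup>2) = v * \<eta>\<^sup>2 / \<epsilon>\<^sup>2"
      using \<open>s > 0\<close> \<open>\<eta> > 0\<close> \<open>\<epsilon> > 0\<close> by (simp add: s_def power_divide power_mult_distrib)
    finally show ?thesis by (simp add: s_def)
  qed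
  have "(\<lambda>n. v / \<delta>\<^sup>2 / real n) \<longlonglongrightarrow> 0" by (rule lim_const_over_n)
  then have "eventually (\<lambda>n. dist (v / \<delta>\<^sup>2 / real n) 0 < e / 2) sequentially"
    using \<open>e > 0\<close> by (intro tendstoD) auto
  then show "eventually (\<lambda>n. dist (prob {\<omega> \<in> space M. \<epsilon> \<le> \<bar>sqrt (real n) * g (Z n \<omega>)\<bar>}) 0 < e) sequentially"
    using eventually_gt_at_top[of 0]
  proof eventually_elim
    case (elim n)
    then have "v / (real n * \<delta>\<^sup>2) < e / 2"
      unfolding dist_real_def diff_zero divide_divide_eq_left mult.commute[of "\<delta>\<^sup>2"]
      by linarith
    then show ?case using bound[OF \<open>n > 0\<close>] small
      by (simp only: dist_real_def diff_zero abs_of_nonneg measure_nonneg)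
  qed
qed

end

section \<open>Slutsky's lemma and rescaling\<close>

context prob_space
begin

lemma cdf_distr_eq_prob:
  assumes [measurable]: "T \<in> borel_measurable M"
  shows "cdf (distr M borel T) x = prob {\<omega> \<in> space M. T \<omega> \<le> x}"
  unfolding cdf_def2 by (subst measure_distr) (auto intro!: arg_cong[where f = prob])

lemma prob_add_le_bounds:
  fixes T W :: "'a \<Rightarrow> real"
  assumes [measurable]: "T \<in> borel_measurable M" "W \<in> borel_measurable M"
  shows "prob {\<omega> \<in> space M. T \<omega> + W \<omega> \<le> x}
      \<le> prob {\<omega> \<in> space M. T \<omega> \<le> x + \<epsilon>} + prob {\<omega> \<in> space M. \<epsilon> \<le> \<bar>W \<omega>\<bar>}"
    and "prob {\<omega> \<in> space M. T \<omega> \<le> x - \<epsilon>}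
      \<le> prob {\<omega> \<in> space M. T \<omega> + W \<omega> \<le> x} + prob {\<omega> \<in> space M. \<epsilon> \<le> \<bar>W \<omega>\<bar>}"
  by (auto intro!: order_trans[OF finite_measure_mono measure_Un_le])

lemma weak_conv_m_add_tendsto_prob_zero:
  fixes T W :: "nat \<Rightarrow> 'a \<Rightarrow> real"
  assumes [measurable]: "\<And>n. T n \<in> borel_measurable M" "\<And>n. W n \<in> borel_measurable M"
    and conv: "weak_conv_m (\<lambda>n. distr M borel (T n)) L"
    and cont: "\<And>x. isCont (cdf L) x"
    and vanish: "\<And>\<epsilon>. \<epsilon> > 0 \<Longrightarrow> (\<lambda>n. prob {\<omega> \<in> space M. \<epsilon> \<le> \<bar>W n \<omega>\<bar>}) \<longlonglongrightarrow> 0"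
  shows "weak_conv_m (\<lambda>n. distr M borel (\<lambda>\<omega>. T n \<omega> + W n \<omega>)) L"
  unfolding weak_conv_m_def weak_conv_def
proof (intro allI impI)
  fix x :: real
  define F where "F n y = prob {\<omega> \<in> space M. T n \<omega> \<le> y}" for n y
  define G where "G n = prob {\<omega> \<in> space M. T n \<omega> + W n \<omega> \<le> x}" for n
  define P where "P \<epsilon> n = prob {\<omega> \<in> space M. \<epsilon> \<le> \<bar>W n \<omega>\<bar>}" for \<epsilon> n
  have F: "(\<lambda>n. F n y) \<longlonglongrightarrow> cdf L y" for y
    using conv cont by (simp add: weak_conv_m_def weak_conv_def F_def cdf_distr_eq_prob)
  have "G \<longlonglongrightarrow> cdf L x"
  proof (rule tendstoI)
    fix e :: real assume "e > 0"
    then have "e / 3 > 0" by simp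
    then obtain d0 where "d0 > 0" and d0: "\<And>y. \<bar>y - x\<bar> < d0 \<Longrightarrow> \<bar>cdf L y - cdf L x\<bar> < e / 3"
      using cont[of x] unfolding continuous_at_eps_delta dist_real_def by blast
    define d where "d = d0 / 2"
    have "d > 0" using \<open>d0 > 0\<close> by (simp add: d_def)
    have "eventually (\<lambda>n. dist (F n (x + d)) (cdf L (x + d)) < e / 3) sequentially"
      "eventually (\<lambda>n. dist (F n (x - d)) (cdf L (x - d)) < e / 3) sequentially"
      using F \<open>e / 3 > 0\<close> by (rule tendstoD)+
    moreover have "eventually (\<lambda>n. dist (P d n) 0 < e / 3) sequentially"
      using vanish[OF \<open>d > 0\<close>] \<open>e / 3 > 0\<close> unfolding P_def by (rule tendstoD)
    ultimately show "eventually (\<lambda>n. dist (G n) (cdf L x) < e) sequentially"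
    proof eventually_elim
      case (elim n)
      have "G n \<le> F n (x + d) + P d n" "F n (x - d) \<le> G n + P d n"
        unfolding F_def G_def P_def by (rule prob_add_le_bounds; simp)+
      moreover have "\<bar>cdf L (x + d) - cdf L x\<bar> < e / 3" "\<bar>cdf L (x - d) - cdf L x\<bar> < e / 3"
        using d0 \<open>d0 > 0\<close> by (auto simp: d_def)
      ultimately show ?case using elim unfolding dist_real_def abs_less_iff by linarith
    qed
  qed
  then show "(\<lambda>n. cdf (distr M borel (\<lambda>\<omega>. T n \<omega> + W n \<omega>)) x) \<longlonglongrightarrow> cdf L x"
    by (simp add: G_def[abs_def] cdf_distr_eq_prob)
qed

end

lemma cdf_distr_scale:
  assumes "sets L = sets borel" and "c > 0"
  shows "cdf (distr L borel ((*) c)) x = cdf L (x / c)"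
proof -
  have [measurable]: "(*) c \<in> L \<rightarrow>\<^sub>M borel"
    by (subst measurable_cong_sets[OF assms(1) refl]) simp
  have "space L = UNIV"
    using sets_eq_imp_space_eq[OF assms(1)] by simp
  moreover have "(*) c -` {..x} = {..x / c}"
    using \<open>c > 0\<close> by (auto simp: field_simps)
  ultimately show ?thesis
    unfolding cdf_def2 by (subst measure_distr) auto
qed

lemma (in prob_space) weak_conv_m_scale:
  fixes T :: "nat \<Rightarrow> 'a \<Rightarrow> real"
  assumes [measurable]: "\<And>n. T n \<in> borel_measurable M"
    and conv: "weak_conv_m (\<lambda>n. distr M borel (T n)) L"
    and L: "sets L = sets borel" and "c > 0"
  shows "weak_conv_m (\<lambda>n. distr M borel (\<lambda>\<omega>. c * T n \<omega>)) (distr L borel ((*) c))"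
  unfolding weak_conv_m_def weak_conv_def
proof (intro allI impI)
  fix x assume cont_scaled: "isCont (cdf (distr L borel ((*) c))) x"
  have distr_scaled: "distr M borel (\<lambda>\<omega>. c * T n \<omega>) = distr (distr M borel (T n)) borel ((*) c)" for n
    by (subst distr_distr) (auto simp: comp_def)
  have "cdf L = (\<lambda>y. cdf (distr L borel ((*) c)) (c * y))"
    using cdf_distr_scale[OF L \<open>c > 0\<close>] \<open>c > 0\<close> by simp
  then have "isCont (cdf L) (x / c)"
    using isCont_o2[of "x / c" "(*) c" "cdf (distr L borel ((*) c))"] cont_scaled \<open>c > 0\<close>
    by (simp add: continuous_intros)
  then show "(\<lambda>n. cdf (distr M borel (\<lambda>\<omega>. c * T n \<omega>)) x) \<longlonglongrightarrow> cdf (distr L borel ((*) c)) x"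
    using conv \<open>c > 0\<close> unfolding weak_conv_m_def weak_conv_def distr_scaled
    by (simp add: cdf_distr_scale L)
qed

lemma distr_std_normal_scale:
  assumes "c > 0"
  shows "distr std_normal_distribution borel ((*) c) = density lborel (normal_density 0 c)"
proof -
  interpret std_normal: real_distribution std_normal_distribution
    by (rule real_dist_normal_dist)
  have "distributed std_normal_distribution lborel (\<lambda>y. y) std_normal_density"
    by (auto simp: distributed_def distr_id2 measurable_ident_sets)
  from std_normal.normal_density_affine[OF this, of c 0] \<open>c > 0\<close>
  show ?thesis by (simp add: distributed_def cong: distr_cong)
qed

lemma isCont_cdf_normal_density:
  assumes "\<sigma> > 0"
  shows "isCont (cdf (density lborel (normal_density \<mu> \<sigma>))) x"
proof -
  interpret real_distribution "density lborel (normal_density \<mu> \<sigma>)"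
    using prob_space_normal_density[OF \<open>\<sigma> > 0\<close>]
    by (simp add: real_distribution_def real_distribution_axioms_def)
  have "emeasure (density lborel (normal_density \<mu> \<sigma>)) {x} = 0"
    by (subst emeasure_density) (auto intro!: nn_integral_null_set simp: emeasure_lborel_countable)
  then show ?thesis
    by (simp add: isCont_cdf measure_def)
qed

section \<open>Poisson moments\<close>

lemma poisson_pmf_Suc:
  assumes "\<mu> > 0"
  shows "pmf (poisson_pmf \<mu>) (Suc n) * real (Suc n) = \<mu> * pmf (poisson_pmf \<mu>) n"
proof -
  have "fact (Suc n) = real (Suc n) * fact n" by (simp only: fact_Suc of_nat_mult)
  then show ?thesis using assms by simp
qed

lemma poisson_pmf_sums:
  assumes "\<mu> > 0"
  shows "(\<lambda>x. pmf (poisson_pmf \<mu>) x) sums 1"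
proof -
  have "(\<lambda>n. \<mu> ^ n / fact n * exp (- \<mu>)) sums (exp \<mu> * exp (- \<mu>))"
    using exp_converges[of \<mu>] by (intro sums_mult2) (simp add: divide_inverse mult.commute)
  then show ?thesis using assms by (simp add: exp_minus_inverse)
qed

lemma poisson_pmf_mult_real_sums:
  assumes "\<mu> > 0"
  shows "(\<lambda>x. pmf (poisson_pmf \<mu>) x * real x) sums \<mu>"
proof -
  have "(\<lambda>n. \<mu> * pmf (poisson_pmf \<mu>) n) sums \<mu>"
    using sums_mult[OF poisson_pmf_sums[OF assms], of \<mu>] by simp
  then show ?thesis
    unfolding poisson_pmf_Suc[OF assms, symmetric] by (subst (asm) sums_Suc_iff) simp
qed

lemma poisson_pmf_mult_square_sums:
  assumes "\<mu> > 0"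
  shows "(\<lambda>x. pmf (poisson_pmf \<mu>) x * (real x)\<^sup>2) sums (\<mu> * (\<mu> + 1))"
proof -
  have "(\<lambda>n. \<mu> * (pmf (poisson_pmf \<mu>) n * real n + pmf (poisson_pmf \<mu>) n)) sums (\<mu> * (\<mu> + 1))"
    by (intro sums_mult sums_add poisson_pmf_mult_real_sums poisson_pmf_sums assms)
  moreover have "pmf (poisson_pmf \<mu>) (Suc n) * (real (Suc n))\<^sup>2
      = \<mu> * (pmf (poisson_pmf \<mu>) n * real n + pmf (poisson_pmf \<mu>) n)" for n
  proof -
    have "pmf (poisson_pmf \<mu>) (Suc n) * (real (Suc n))\<^sup>2
        = pmf (poisson_pmf \<mu>) (Suc n) * real (Suc n) * real (Suc n)"
      by (simp add: power2_eq_square)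
    also have "\<dots> = \<mu> * pmf (poisson_pmf \<mu>) n * real (Suc n)"
      by (simp only: poisson_pmf_Suc[OF assms])
    finally show ?thesis by (simp add: algebra_simps)
  qed
  ultimately have "(\<lambda>n. pmf (poisson_pmf \<mu>) (Suc n) * (real (Suc n))\<^sup>2) sums (\<mu> * (\<mu> + 1))"
    by simp
  then show ?thesis by (subst (asm) sums_Suc_iff) simp
qed

lemma sum_poisson_pmf_atMost:
  assumes "\<mu> > 0"
  shows "(\<Sum>x\<le>k. pmf (poisson_pmf \<mu>) x) = f_poi k \<mu>"
  using assms by (simp add: f_poi_def sum_distrib_left sum_distrib_right mult.commute)

lemma sum_poisson_pmf_mult_real_atMost:
  assumes "\<mu> > 0"
  shows "(\<Sum>x\<le>k. pmf (poisson_pmf \<mu>) x * real x) = \<mu> * (f_poi k \<mu> - pmf (poisson_pmf \<mu>) k)"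
proof (induction k)
  case 0
  then show ?case using assms by (simp add: f_poi_def)
next
  case (Suc k)
  then have "(\<Sum>x\<le>Suc k. pmf (poisson_pmf \<mu>) x * real x) = \<mu> * f_poi k \<mu>"
    by (simp only: sum.atMost_Suc poisson_pmf_Suc[OF assms]) (simp add: algebra_simps)
  also have "f_poi k \<mu> = f_poi (Suc k) \<mu> - pmf (poisson_pmf \<mu>) (Suc k)"
    using assms by (simp add: f_poi_def algebra_simps)
  finally show ?case .
qed

lemma measure_pmf_integral_sums:
  fixes q :: "nat pmf" and h :: "nat \<Rightarrow> real"
  assumes nonneg: "\<And>x. 0 \<le> h x" and sums: "(\<lambda>x. pmf q x * h x) sums s"
  shows "integrable (measure_pmf q) h" and "measure_pmf.expectation q h = s"
proof -
  have int: "integrable (count_space UNIV) (\<lambda>x. pmf q x * h x)"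
    unfolding integrable_count_space_nat_iff using sums nonneg by (simp add: abs_mult sums_iff)
  then show "integrable (measure_pmf q) h"
    unfolding measure_pmf_eq_density by (subst integrable_density) auto
  have "measure_pmf.expectation q h = integral\<^sup>L (count_space UNIV) (\<lambda>x. pmf q x * h x)"
    unfolding measure_pmf_eq_density by (subst integral_density) auto
  also have "\<dots> = s" using integral_count_space_nat[OF int] sums by (simp add: sums_iff)
  finally show "measure_pmf.expectation q h = s" .
qed

lemma measure_pmf_variance_pos:
  fixes q :: "'a pmf" and h :: "'a \<Rightarrow> real"
  assumes int: "integrable (measure_pmf q) h" "integrable (measure_pmf q) (\<lambda>x. (h x)\<^sup>2)"
    and "x \<in> set_pmf q" "x' \<in> set_pmf q" "h x \<noteq> h x'"
  shows "measure_pmf.variance q h > 0"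
proof -
  let ?c = "measure_pmf.expectation q h"
  have "integrable (measure_pmf q) (\<lambda>x. (h x - ?c)\<^sup>2)"
    using int by (simp add: power2_diff)
  moreover have "h x \<noteq> ?c \<or> h x' \<noteq> ?c"
    using assms(5) by auto
  then have "\<not> (AE y in measure_pmf q. (h y - ?c)\<^sup>2 = 0)"
    using assms(3,4) by (auto simp: AE_measure_pmf_iff)
  ultimately have "measure_pmf.variance q h \<noteq> 0"
    by (subst integral_nonneg_eq_0_iff_AE) auto
  then show ?thesis
    using measure_pmf.variance_positive[of q h] by linarith
qed

lemma poisson_variance_linear_indicator:
  fixes \<mu> :: real and k :: nat
  assumes "\<mu> > 0"
  defines "y \<equiv> \<lambda>x. pmf (poisson_pmf \<mu>) k * real x + of_bool (x \<le> k)"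
  shows "integrable (measure_pmf (poisson_pmf \<mu>)) y"
    and "integrable (measure_pmf (poisson_pmf \<mu>)) (\<lambda>x. (y x)\<^sup>2)"
    and "measure_pmf.expectation (poisson_pmf \<mu>) y = pmf (poisson_pmf \<mu>) k * \<mu> + f_poi k \<mu>"
    and "measure_pmf.variance (poisson_pmf \<mu>) y = sigma2 \<mu> k"
proof -
  let ?p = "pmf (poisson_pmf \<mu>)"
  define a where "a = ?p k"
  define f where "f = f_poi k \<mu>"
  have indicator: "(\<lambda>x. ?p x * of_bool (x \<le> k)) sums f"
    using sums_finite[of "{..k}" "\<lambda>x. ?p x * of_bool (x \<le> k)"]
    by (simp add: f_def sum_poisson_pmf_atMost[OF assms(1)])
  have real_indicator: "(\<lambda>x. ?p x * real x * of_bool (x \<le> k)) sums (\<mu> * (f - a))"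
    using sums_finite[of "{..k}" "\<lambda>x. ?p x * real x * of_bool (x \<le> k)"]
    by (simp add: f_def a_def sum_poisson_pmf_mult_real_atMost[OF assms(1)])
  have "(\<lambda>x. a * (?p x * real x) + ?p x * of_bool (x \<le> k)) sums (a * \<mu> + f)"
    by (intro sums_add sums_mult poisson_pmf_mult_real_sums indicator assms(1))
  then have first: "(\<lambda>x. ?p x * y x) sums (a * \<mu> + f)"
    by (simp add: y_def a_def algebra_simps)
  have "(\<lambda>x. a\<^sup>2 * (?p x * (real x)\<^sup>2) + 2 * a * (?p x * real x * of_bool (x \<le> k))
      + ?p x * of_bool (x \<le> k)) sums (a\<^sup>2 * (\<mu> * (\<mu> + 1)) + 2 * a * (\<mu> * (f - a)) + f)"
    by (intro sums_add sums_mult poisson_pmf_mult_square_sums real_indicator indicator assms(1))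
  moreover have "?p x * (y x)\<^sup>2 = a\<^sup>2 * (?p x * (real x)\<^sup>2)
      + 2 * a * (?p x * real x * of_bool (x \<le> k)) + ?p x * of_bool (x \<le> k)" for x
    by (cases "x \<le> k") (simp_all add: y_def a_def power2_eq_square algebra_simps)
  ultimately have second:
    "(\<lambda>x. ?p x * (y x)\<^sup>2) sums (a\<^sup>2 * (\<mu> * (\<mu> + 1)) + 2 * a * (\<mu> * (f - a)) + f)"
    by simp
  have "0 \<le> y x" for x by (simp add: y_def)
  note first_moment = measure_pmf_integral_sums[OF this first]
  note second_moment = measure_pmf_integral_sums[OF _ second]
  show int_y: "integrable (measure_pmf (poisson_pmf \<mu>)) y"
    by (rule first_moment(1))
  show int_y2: "integrable (measure_pmf (poisson_pmf \<mu>)) (\<lambda>x. (y x)\<^sup>2)"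
    by (rule second_moment(1)) simp
  show "measure_pmf.expectation (poisson_pmf \<mu>) y = pmf (poisson_pmf \<mu>) k * \<mu> + f_poi k \<mu>"
    using first_moment(2) by (simp add: a_def f_def)
  have "exp (- 2 * \<mu>) = exp (- \<mu>) * exp (- \<mu>)"
    by (simp add: mult_exp_exp)
  then have "a\<^sup>2 * \<mu> = exp (- 2 * \<mu>) * \<mu> ^ (2 * k + 1) / (fact k)\<^sup>2"
    using assms(1) by (simp add: a_def power2_eq_square power_add power_mult field_simps)
  then have "sigma2 \<mu> k = f * (1 - f) - a\<^sup>2 * \<mu>"
    by (simp add: sigma2_def f_def)
  moreover have "measure_pmf.variance (poisson_pmf \<mu>) y
      = measure_pmf.expectation (poisson_pmf \<mu>) (\<lambda>x. (y x)\<^sup>2)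
        - (measure_pmf.expectation (poisson_pmf \<mu>) y)\<^sup>2"
    by (rule measure_pmf.variance_eq[OF int_y int_y2])
  ultimately show "measure_pmf.variance (poisson_pmf \<mu>) y = sigma2 \<mu> k"
    using first_moment(2) second_moment(2) by (simp add: power2_eq_square algebra_simps)
qed

lemma sigma2_pos:
  assumes "\<mu> > 0"
  shows "sigma2 \<mu> k > 0"
proof -
  let ?y = "\<lambda>x. pmf (poisson_pmf \<mu>) k * real x + of_bool (x \<le> k)"
  note moments = poisson_variance_linear_indicator[OF assms, of k]
  have "?y 0 \<noteq> ?y 1"
  proof (cases k)
    case 0
    then show ?thesis using assms by simp
  next
    case (Suc j)
    then show ?thesis using assms by simp
  qed
  then have "measure_pmf.variance (poisson_pmf \<mu>) ?y > 0"
    using assms by (intro measure_pmf_variance_pos[OF moments(1,2), of 0 1]) auto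
  then show ?thesis by (simp only: moments(4))
qed

section \<open>The statistic V_n\<close>

lemma f_poi_has_real_derivative:
  "(f_poi k has_real_derivative - (exp (- m) * m ^ k / fact k)) (at m)"
proof (induction k)
  case 0
  have "f_poi 0 = (\<lambda>m. exp (- m))" by (simp add: f_poi_def fun_eq_iff)
  then show ?case by (auto intro!: derivative_eq_intros)
next
  case (Suc k)
  have split: "f_poi (Suc k) = (\<lambda>m. f_poi k m + exp (- m) * (m ^ Suc k / fact (Suc k)))"
    by (simp add: f_poi_def fun_eq_iff algebra_simps)
  have exp: "((\<lambda>m. exp (- m)) has_real_derivative - exp (- m)) (at m)"
    by (auto intro!: derivative_eq_intros)
  have pow: "((\<lambda>m. m ^ Suc k / fact (Suc k)) has_real_derivative m ^ k / fact k) (at m)"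
    using DERIV_cdivide[OF DERIV_pow[of "Suc k" m], of "fact (Suc k)"]
    by (simp add: fact_Suc del: of_nat_Suc)
  show ?case
    unfolding split by (rule DERIV_cong[OF DERIV_add[OF Suc DERIV_mult[OF exp pow]]]) simp
qed

lemma f_poi_measurable [measurable]: "f_poi k \<in> borel_measurable borel"
  unfolding f_poi_def by measurable

lemma V_stat_decomposition:
  "V_stat X k n \<omega> =
    (\<Sum>i<n. a * \<mu> + f_poi k \<mu> - (a * real (X i \<omega>) + of_bool (X i \<omega> \<le> k))) / sqrt (real n)
    + sqrt (real n) * (f_poi k (sample_mean X n \<omega>) - f_poi k \<mu> + a * (sample_mean X n \<omega> - \<mu>))"
proof (cases "n = 0")
  case True
  then show ?thesis by (simp add: V_stat_def)
next
  case False
  define s where "s = sqrt (real n)"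
  have "s > 0" and n: "real n = s * s" using False by (simp_all add: s_def)
  have "real n * sample_mean X n \<omega> = (\<Sum>i<n. real (X i \<omega>))"
    and "real n * emp_cdf X n k \<omega> = (\<Sum>i<n. of_bool (X i \<omega> \<le> k))"
    using False by (simp_all add: sample_mean_def emp_cdf_def)
  then have "(\<Sum>i<n. a * \<mu> + f_poi k \<mu> - (a * real (X i \<omega>) + of_bool (X i \<omega> \<le> k)))
      = real n * (a * \<mu> + f_poi k \<mu>) - a * (real n * sample_mean X n \<omega>) - real n * emp_cdf X n k \<omega>"
    by (simp add: sum_subtractf sum.distrib sum_distrib_left)
  then show ?thesis
    using \<open>s > 0\<close> unfolding V_stat_def s_def[symmetric] n by (simp add: field_simps)
qed

locale iid_nat_sequence = prob_space M for M :: "'a measure" +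
  fixes X :: "nat \<Rightarrow> 'a \<Rightarrow> nat"
  assumes measurable_X [measurable]: "\<And>i. X i \<in> M \<rightarrow>\<^sub>M count_space UNIV"
    and indep_X: "indep_vars (\<lambda>_. count_space UNIV) X UNIV"
    and distr_X: "\<And>i. distr M (count_space UNIV) (X i) = distr M (count_space UNIV) (X 0)"
begin

lemma integral_comp_X:
  fixes g :: "nat \<Rightarrow> real"
  shows "expectation (\<lambda>\<omega>. g (X i \<omega>)) = integral\<^sup>L (distr M (count_space UNIV) (X 0)) g"
  by (subst distr_X[of i, symmetric]) (simp add: integral_distr)

lemma integrable_comp_X:
  fixes g :: "nat \<Rightarrow> real"
  shows "integrable M (\<lambda>\<omega>. g (X i \<omega>)) \<longleftrightarrow> integrable (distr M (count_space UNIV) (X 0)) g"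
  by (subst distr_X[of i, symmetric]) (simp add: integrable_distr_eq)

lemma prob_abs_mean_comp_deviation_ge_le:
  fixes h :: "nat \<Rightarrow> real"
  assumes "integrable M (\<lambda>\<omega>. (h (X 0 \<omega>))\<^sup>2)" and "n > 0" and "a > 0"
  shows "prob {\<omega> \<in> space M. a \<le> \<bar>(\<Sum>i<n. h (X i \<omega>)) / real n - expectation (\<lambda>\<omega>. h (X 0 \<omega>))\<bar>}
    \<le> variance (\<lambda>\<omega>. h (X 0 \<omega>)) / (real n * a\<^sup>2)"
proof (rule prob_abs_mean_deviation_ge_le[OF _ _ _ _ \<open>n > 0\<close> \<open>a > 0\<close>])
  show "indep_vars (\<lambda>_. borel) (\<lambda>i \<omega>. h (X i \<omega>)) UNIV"
    by (rule indep_vars_compose2[OF indep_X]) simp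
  show "integrable M (\<lambda>\<omega>. (h (X i \<omega>))\<^sup>2)" for i
    using assms(1) integrable_comp_X[of "\<lambda>x. (h x)\<^sup>2"] by simp
  show mean: "expectation (\<lambda>\<omega>. h (X i \<omega>)) = expectation (\<lambda>\<omega>. h (X 0 \<omega>))" for i
    by (simp only: integral_comp_X)
  show "variance (\<lambda>\<omega>. h (X i \<omega>)) = variance (\<lambda>\<omega>. h (X 0 \<omega>))" for i
    unfolding mean[of i] by (simp only: integral_comp_X[of "\<lambda>x. (h x - _)\<^sup>2"])
qed

lemma tendsto_prob_abs_mean_comp_deviation_zero:
  fixes h :: "nat \<Rightarrow> real"
  assumes "integrable M (\<lambda>\<omega>. (h (X 0 \<omega>))\<^sup>2)" and "\<epsilon> > 0"
  shows "(\<lambda>n. prob {\<omega> \<in> space M. \<epsilon> \<le> \<bar>(\<Sum>i<n. h (X i \<omega>)) / real n - expectation (\<lambda>\<omega>. h (X 0 \<omega>))\<bar>})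
    \<longlonglongrightarrow> 0"
proof (rule tendsto_sandwich[OF _ _ tendsto_const])
  show "(\<lambda>n. variance (\<lambda>\<omega>. h (X 0 \<omega>)) / \<epsilon>\<^sup>2 / real n) \<longlonglongrightarrow> 0"
    by (rule lim_const_over_n)
  show "eventually (\<lambda>n. prob {\<omega> \<in> space M. \<epsilon> \<le> \<bar>(\<Sum>i<n. h (X i \<omega>)) / real n - expectation (\<lambda>\<omega>. h (X 0 \<omega>))\<bar>}
      \<le> variance (\<lambda>\<omega>. h (X 0 \<omega>)) / \<epsilon>\<^sup>2 / real n) sequentially"
    using eventually_gt_at_top[of 0]
    by eventually_elim (use prob_abs_mean_comp_deviation_ge_le[OF assms(1) _ assms(2)] in \<open>simp add: mult.commute\<close>)
qed simp

lemma sample_mean_measurable [measurable]: "sample_mean X n \<in> borel_measurable M"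
  unfolding sample_mean_def[abs_def] by measurable

lemma emp_cdf_measurable [measurable]: "emp_cdf X n k \<in> borel_measurable M"
  unfolding emp_cdf_def[abs_def] by measurable

lemma V_stat_measurable [measurable]: "V_stat X k n \<in> borel_measurable M"
  unfolding V_stat_def[abs_def] by measurable

lemma V_stat_diverges:
  assumes square_int: "integrable M (\<lambda>\<omega>. (real (X 0 \<omega>))\<^sup>2)"
    and bias: "prob {\<omega> \<in> space M. X 0 \<omega> \<le> k} \<noteq> f_poi k (expectation (\<lambda>\<omega>. real (X 0 \<omega>)))"
  shows "(\<lambda>n. prob {\<omega> \<in> space M. \<bar>V_stat X k n \<omega>\<bar> \<le> C}) \<longlonglongrightarrow> 0"
proof -
  define \<mu> where "\<mu> = expectation (\<lambda>\<omega>. real (X 0 \<omega>))"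
  define q where "q = prob {\<omega> \<in> space M. X 0 \<omega> \<le> k}"
  define d where "d = \<bar>q - f_poi k \<mu>\<bar> / 3"
  have "d > 0" using bias by (simp add: d_def q_def \<mu>_def)
  obtain \<delta> where "\<delta> > 0" and \<delta>: "\<And>x. \<bar>x - \<mu>\<bar> < \<delta> \<Longrightarrow> \<bar>f_poi k x - f_poi k \<mu>\<bar> < d"
    using DERIV_isCont[OF f_poi_has_real_derivative[where k = k and m = \<mu>]] \<open>d > 0\<close>
    unfolding continuous_at_eps_delta dist_real_def by blast
  have "expectation (\<lambda>\<omega>. of_bool (X 0 \<omega> \<le> k)) = expectation (indicator {\<omega> \<in> space M. X 0 \<omega> \<le> k})"
    by (intro Bochner_Integration.integral_cong) (auto simp: indicator_def)
  also have "\<dots> = q"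
    unfolding q_def by (subst Bochner_Integration.integral_indicator) (auto intro!: arg_cong[where f = prob])
  finally have expectation_indicator: "expectation (\<lambda>\<omega>. of_bool (X 0 \<omega> \<le> k)) = q" .
  have "integrable M (\<lambda>\<omega>. (of_bool (X 0 \<omega> \<le> k) :: real)\<^sup>2)"
    by (intro integrable_const_bound[where B = 1]) auto
  from tendsto_prob_abs_mean_comp_deviation_zero[OF this \<open>d > 0\<close>]
  have cdf_dev: "(\<lambda>n. prob {\<omega> \<in> space M. d \<le> \<bar>emp_cdf X n k \<omega> - q\<bar>}) \<longlonglongrightarrow> 0"
    by (simp add: emp_cdf_def expectation_indicator)
  from tendsto_prob_abs_mean_comp_deviation_zero[OF square_int \<open>\<delta> > 0\<close>]
  have mean_dev: "(\<lambda>n. prob {\<omega> \<in> space M. \<delta> \<le> \<bar>sample_mean X n \<omega> - \<mu>\<bar>}) \<longlonglongrightarrow> 0"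
    by (simp add: sample_mean_def \<mu>_def)
  have "filterlim (\<lambda>n. sqrt (real n)) at_top sequentially"
    by (rule filterlim_compose[OF sqrt_at_top filterlim_real_sequentially])
  then have "eventually (\<lambda>n. C / d < sqrt (real n)) sequentially"
    by (simp add: filterlim_at_top_dense)
  then have "eventually (\<lambda>n. prob {\<omega> \<in> space M. \<bar>V_stat X k n \<omega>\<bar> \<le> C}
      \<le> prob {\<omega> \<in> space M. \<delta> \<le> \<bar>sample_mean X n \<omega> - \<mu>\<bar>}
        + prob {\<omega> \<in> space M. d \<le> \<bar>emp_cdf X n k \<omega> - q\<bar>}) sequentially"
  proof eventually_elim
    case (elim n)
    have "{\<omega> \<in> space M. \<bar>V_stat X k n \<omega>\<bar> \<le> C}
        \<subseteq> {\<omega> \<in> space M. \<delta> \<le> \<bar>sample_mean X n \<omega> - \<mu>\<bar>} \<union> {\<omega> \<in> space M. d \<le> \<bar>emp_cdf X n k \<omega> - q\<bar>}"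
    proof (intro subsetI, rule ccontr)
      fix \<omega> assume \<omega>: "\<omega> \<in> {\<omega> \<in> space M. \<bar>V_stat X k n \<omega>\<bar> \<le> C}"
        and "\<omega> \<notin> {\<omega> \<in> space M. \<delta> \<le> \<bar>sample_mean X n \<omega> - \<mu>\<bar>} \<union> {\<omega> \<in> space M. d \<le> \<bar>emp_cdf X n k \<omega> - q\<bar>}"
      then have "\<bar>f_poi k (sample_mean X n \<omega>) - f_poi k \<mu>\<bar> < d" and "\<bar>emp_cdf X n k \<omega> - q\<bar> < d"
        using \<delta> by auto
      then have "d \<le> \<bar>f_poi k (sample_mean X n \<omega>) - emp_cdf X n k \<omega>\<bar>"
        unfolding d_def by (simp add: abs_if split: if_splits)
      then have "sqrt (real n) * d \<le> \<bar>V_stat X k n \<omega>\<bar>"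
        by (simp add: V_stat_def abs_mult mult_left_mono)
      moreover have "C < sqrt (real n) * d"
        using elim \<open>d > 0\<close> by (simp add: field_simps)
      ultimately show False using \<omega> by simp
    qed
    then show ?case
      by (intro order_trans[OF finite_measure_mono measure_Un_le]) auto
  qed
  then show ?thesis
    by (intro tendsto_sandwich[OF _ _ tendsto_const tendsto_add[OF mean_dev cdf_dev, simplified]]) auto
qed

lemma poisson_law_moments:
  assumes law: "distr M (count_space UNIV) (X 0) = measure_pmf (poisson_pmf \<mu>)" and "\<mu> > 0"
  shows "integrable M (\<lambda>\<omega>. (real (X 0 \<omega>))\<^sup>2)" and "expectation (\<lambda>\<omega>. real (X 0 \<omega>)) = \<mu>"
proof -
  show "integrable M (\<lambda>\<omega>. (real (X 0 \<omega>))\<^sup>2)"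
    using measure_pmf_integral_sums(1)[OF _ poisson_pmf_mult_square_sums[OF \<open>\<mu> > 0\<close>]]
    by (simp add: integrable_comp_X[of "\<lambda>x. (real x)\<^sup>2"] law)
  show "expectation (\<lambda>\<omega>. real (X 0 \<omega>)) = \<mu>"
    using measure_pmf_integral_sums(2)[OF _ poisson_pmf_mult_real_sums[OF \<open>\<mu> > 0\<close>]]
    by (simp add: integral_comp_X[of real] law)
qed

lemma variance_comp_X:
  fixes g :: "nat \<Rightarrow> real"
  assumes law: "distr M (count_space UNIV) (X 0) = measure_pmf q"
  shows "variance (\<lambda>\<omega>. g (X i \<omega>)) = measure_pmf.variance q g"
  by (simp add: integral_comp_X[of "\<lambda>x. (g x - _)\<^sup>2"] integral_comp_X[of g] law)

lemma variance_linear_indicator_eq_sigma2: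
  assumes law: "distr M (count_space UNIV) (X 0) = measure_pmf (poisson_pmf \<mu>)" and "\<mu> > 0"
  shows "variance (\<lambda>\<omega>. exp (- \<mu>) * \<mu> ^ k / fact k * real (X 0 \<omega>) + of_bool (X 0 \<omega> \<le> k))
    = sigma2 \<mu> k"
proof -
  have "exp (- \<mu>) * \<mu> ^ k / fact k = pmf (poisson_pmf \<mu>) k"
    using \<open>\<mu> > 0\<close> by simp
  then show ?thesis
    using poisson_variance_linear_indicator(4)[OF \<open>\<mu> > 0\<close>, of k]
    by (simp only: variance_comp_X[OF law, of "\<lambda>x. pmf (poisson_pmf \<mu>) k * real x + of_bool (x \<le> k)"])
qed

lemma clt_linear_indicator:
  fixes \<mu> :: real and k :: nat
  assumes law: "distr M (count_space UNIV) (X 0) = measure_pmf (poisson_pmf \<mu>)" and "\<mu> > 0"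
  defines "y \<equiv> \<lambda>x. pmf (poisson_pmf \<mu>) k * real x + of_bool (x \<le> k)"
    and "c \<equiv> pmf (poisson_pmf \<mu>) k * \<mu> + f_poi k \<mu>"
  shows "weak_conv_m (\<lambda>n. distr M borel (\<lambda>\<omega>. (\<Sum>i<n. c - y (X i \<omega>)) / sqrt (real n)))
    (density lborel (normal_density 0 (sqrt (sigma2 \<mu> k))))"
proof -
  define \<sigma> where "\<sigma> = sqrt (sigma2 \<mu> k)"
  have "\<sigma> > 0" using sigma2_pos[OF \<open>\<mu> > 0\<close>] by (simp add: \<sigma>_def)
  define Y where "Y i \<omega> = c - y (X i \<omega>)" for i \<omega>
  note moments = poisson_variance_linear_indicator[OF \<open>\<mu> > 0\<close>, of k, folded y_def c_def]
  have [measurable]: "Y i \<in> borel_measurable M" for i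
    unfolding Y_def by measurable
  have indep: "indep_vars (\<lambda>_. borel) Y UNIV"
    unfolding Y_def[abs_def] by (rule indep_vars_compose2[OF indep_X]) simp
  have int_square: "integrable (measure_pmf (poisson_pmf \<mu>)) (\<lambda>x. (c - y x)\<^sup>2)"
    using moments(1,2) by (simp add: power2_diff y_def)
  have mean: "expectation (Y i) = 0" for i
    using integral_comp_X[of "\<lambda>x. c - y x" i] moments(1,3) by (simp add: Y_def[abs_def] law)
  have square_int: "integrable M (\<lambda>\<omega>. (Y i \<omega>)\<^sup>2)" for i
    using integrable_comp_X[of "\<lambda>x. (c - y x)\<^sup>2" i] int_square by (simp add: Y_def law)
  have var: "variance (Y i) = \<sigma>\<^sup>2" for i
  proof -
    have "variance (Y i) = measure_pmf.expectation (poisson_pmf \<mu>) (\<lambda>x. (c - y x)\<^sup>2)"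
      using integral_comp_X[of "\<lambda>x. (c - y x)\<^sup>2" i] by (simp add: mean Y_def law)
    also have "\<dots> = measure_pmf.variance (poisson_pmf \<mu>) y"
      by (simp add: moments(3) power2_commute)
    finally show ?thesis
      using moments(4) sigma2_pos[OF \<open>\<mu> > 0\<close>, of k] by (simp add: \<sigma>_def y_def)
  qed
  have distr: "distr M borel (Y i) = distr M borel (Y 0)" for i
  proof -
    have "distr M borel (Y j) = distr (distr M (count_space UNIV) (X j)) borel (\<lambda>x. c - y x)" for j
      by (subst distr_distr) (auto simp: Y_def[abs_def] comp_def)
    then show ?thesis using distr_X[of i] by simp
  qed
  have "weak_conv_m (\<lambda>n. distr M borel (\<lambda>\<omega>. (\<Sum>i<n. Y i \<omega>) / sqrt (real n * \<sigma>\<^sup>2))) std_normal_distribution"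
    by (rule central_limit_theorem_zero_mean[OF indep mean \<open>\<sigma> > 0\<close> square_int var distr])
  from weak_conv_m_scale[OF _ this _ \<open>\<sigma> > 0\<close>]
  have "weak_conv_m (\<lambda>n. distr M borel (\<lambda>\<omega>. \<sigma> * ((\<Sum>i<n. Y i \<omega>) / sqrt (real n * \<sigma>\<^sup>2))))
      (density lborel (normal_density 0 \<sigma>))"
    by (simp add: distr_std_normal_scale[OF \<open>\<sigma> > 0\<close>])
  moreover have "\<sigma> * ((\<Sum>i<n. Y i \<omega>) / sqrt (real n * \<sigma>\<^sup>2)) = (\<Sum>i<n. c - y (X i \<omega>)) / sqrt (real n)"
    for n \<omega>
    using \<open>\<sigma> > 0\<close> by (simp add: Y_def real_sqrt_mult)
  ultimately show ?thesis by (simp add: \<sigma>_def)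
qed

lemma V_stat_weak_conv_normal:
  assumes law: "distr M (count_space UNIV) (X 0) = measure_pmf (poisson_pmf \<mu>)" and "\<mu> > 0"
  shows "weak_conv_m (\<lambda>n. distr M borel (V_stat X k n))
    (density lborel (normal_density 0 (sqrt (sigma2 \<mu> k))))"
proof -
  define a where "a = pmf (poisson_pmf \<mu>) k"
  define R where "R x = f_poi k x - f_poi k \<mu> + a * (x - \<mu>)" for x
  have "a = exp (- \<mu>) * \<mu> ^ k / fact k" using \<open>\<mu> > 0\<close> by (simp add: a_def)
  then have "(f_poi k has_derivative (*) (- a)) (at \<mu>)"
    using f_poi_has_real_derivative[of k \<mu>] by (simp add: has_field_derivative_def)
  then have remainder: "\<exists>\<delta>>0. \<forall>x. \<bar>x - \<mu>\<bar> < \<delta> \<longrightarrow> \<bar>R x\<bar> \<le> \<eta> * \<bar>x - \<mu>\<bar>" if "\<eta> > 0" for \<eta>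
    using that unfolding has_derivative_at_alt R_def by (simp add: algebra_simps)
  note moments = poisson_law_moments[OF law \<open>\<mu> > 0\<close>]
  have "prob {\<omega> \<in> space M. e \<le> \<bar>sample_mean X n \<omega> - \<mu>\<bar>}
      \<le> variance (\<lambda>\<omega>. real (X 0 \<omega>)) / (real n * e\<^sup>2)" if "n > 0" "e > 0" for n e
    using prob_abs_mean_comp_deviation_ge_le[OF moments(1) that] by (simp add: sample_mean_def moments(2))
  from tendsto_prob_sqrt_remainder_zero[OF _ remainder this]
  have "(\<lambda>n. prob {\<omega> \<in> space M. \<epsilon> \<le> \<bar>sqrt (real n) * R (sample_mean X n \<omega>)\<bar>}) \<longlonglongrightarrow> 0"
    if "\<epsilon> > 0" for \<epsilon>
    using that by simp
  note normal_limit = weak_conv_m_add_tendsto_prob_zero[OF _ _ clt_linear_indicator[OF law \<open>\<mu> > 0\<close>, of k]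
      isCont_cdf_normal_density this]
  have "weak_conv_m (\<lambda>n. distr M borel (\<lambda>\<omega>.
      (\<Sum>i<n. a * \<mu> + f_poi k \<mu> - (a * real (X i \<omega>) + of_bool (X i \<omega> \<le> k))) / sqrt (real n)
      + sqrt (real n) * R (sample_mean X n \<omega>))) (density lborel (normal_density 0 (sqrt (sigma2 \<mu> k))))"
    using sigma2_pos[OF \<open>\<mu> > 0\<close>, of k] unfolding a_def by (intro normal_limit) (auto simp: R_def)
  then show ?thesis
    by (simp add: R_def V_stat_decomposition[where a = a and \<mu> = \<mu>, symmetric])
qed

end

theorem proposition2:
  fixes M :: "'a measure" and X :: "nat \<Rightarrow> 'a \<Rightarrow> nat" and k :: nat and \<mu> :: real
  assumes "prob_space M"
    and rv: "\<And>i. X i \<in> measurable M (count_space UNIV)"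
    and indep: "prob_space.indep_vars M (\<lambda>_. count_space UNIV) X UNIV"
    and ident: "\<And>i. distr M (count_space UNIV) (X i) = distr M (count_space UNIV) (X 0)"
    and finvar: "integrable M (\<lambda>\<omega>. (real (X 0 \<omega>))\<^sup>2)"
    and mu_def: "\<mu> = prob_space.expectation M (\<lambda>\<omega>. real (X 0 \<omega>))"
    and mu_pos: "\<mu> > 0"
  shows
    "(distr M (count_space UNIV) (X 0) = measure_pmf (poisson_pmf \<mu>) \<longrightarrow>
        sigma2 \<mu> k = prob_space.variance M
            (\<lambda>\<omega>. exp (- \<mu>) * \<mu> ^ k / fact k * real (X 0 \<omega>) + of_bool (X 0 \<omega> \<le> k))
      \<and> weak_conv_m (\<lambda>n. distr M borel (V_stat X k n))
            (density lborel (normal_density 0 (sqrt (sigma2 \<mu> k)))))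
     \<and>
     (prob_space.prob M {\<omega> \<in> space M. X 0 \<omega> \<le> k} - f_poi k \<mu> \<noteq> 0 \<longrightarrow>
        (\<forall>C::real. (\<lambda>n. prob_space.prob M {\<omega> \<in> space M. \<bar>V_stat X k n \<omega>\<bar> \<le> C})
                       \<longlonglongrightarrow> 0))"
proof -
  interpret iid_nat_sequence M X
    using \<open>prob_space M\<close> rv indep ident
    by (simp add: iid_nat_sequence_def iid_nat_sequence_axioms_def)
  show ?thesis
    using variance_linear_indicator_eq_sigma2[OF _ mu_pos] V_stat_weak_conv_normal[OF _ mu_pos]
      V_stat_diverges[OF finvar] mu_def by auto
qed

end
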